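(* In the setting of the context, assume $\mathbf{A}^{-1}$ exists and $\mathbf{Q}_\Delta$ is given by the LU trick. Then for every $k\in\mathbb{N}$ there exist constants $c>0$, $c'\ge0$ and $\mu^*>0$ such that for all $\mu\ge\mu^*$, $$\Big\|\mathbf{C}\big(\mathbf{I}_{LMN}-\hat{\mathbf{P}}^{-1}\mathbf{C}\big)^k\Big\|\le\mu\Big(c\,\big\|\mathbf{I}_L\otimes(\mathbf{I}_M-\mathbf{Q}_\Delta^{-1}\mathbf{Q})^k\otimes\mathbf{I}_N\big\|+\frac{c'}{\mu}\Big),$$ i.e. the norm is bounded by $\mu\big(c\|\mathbf{I}_L\otimes(\mathbf{I}_M-\mathbf{Q}_\Delta^{-1}\mathbf{Q})^k\otimes\mathbf{I}_N\|+\mathcal{O}(1/\mu)\big)$.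
   Context: Fix positive integers $L,M,N$. $\mathbf{Q}=(q_{m,j})\in\mathbb{R}^{M\times M}$ with $q_{m,j}=\int_0^{\tau_m}\ell_j(s)\,ds$ is the collocation matrix for the (right) Gauss–Radau nodes $0<\tau_1<\dots<\tau_M=1$ on $[0,1]$ ($\ell_j$ Lagrange basis polynomials). LU trick: $\mathbf{Q}^T=\mathbf{L}_Q\mathbf{U}_Q$ with $\mathbf{L}_Q$ unit lower triangular and $\mathbf{U}_Q$ upper triangular, $\mathbf{Q}_\Delta=\mathbf{U}_Q^T$. $\mathbf{A}\in\mathbb{C}^{N\times N}$, $\mu>0$. $\mathbf{N}_M\in\mathbb{R}^{M\times M}$ has ones in its last column and zeros elsewhere, $\mathbf{H}=\mathbf{N}_M\otimes\mathbf{I}_N$, $\mathbf{E}\in\mathbb{R}^{L\times L}$ has ones on the first subdiagonal and zeros elsewhere. $\mathbf{C}=\mathbf{I}_{LMN}-\mu\,\mathbf{I}_L\otimes\mathbf{Q}\otimes\mathbf{A}-\mathbf{E}\otimes\mathbf{H}$, $\hat{\mathbf{P}}=\mathbf{I}_{LMN}-\mu\,\mathbf{I}_L\otimes\mathbf{Q}_\Delta\otimes\mathbf{A}$ (assumed invertible). $\|\cdot\|$ is any induced matrix norm. *)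

theory Defs
  imports "HOL-Analysis.Analysis" "Jordan_Normal_Form.Matrix"
begin

definition kron :: "'a::times mat \<Rightarrow> 'a mat \<Rightarrow> 'a mat" where
  "kron A B = mat (dim_row A * dim_row B) (dim_col A * dim_col B)
     (\<lambda>(i,j). A $$ (i div dim_row B, j div dim_col B) * B $$ (i mod dim_row B, j mod dim_col B))"

(* inverse of an n x n matrix (meaningful when it is invertible) *)
definition inv_mat :: "nat \<Rightarrow> 'a::semiring_1 mat \<Rightarrow> 'a mat" where
  "inv_mat n A = (THE B. B \<in> carrier_mat n n \<and> A * B = 1\<^sub>m n \<and> B * A = 1\<^sub>m n)"

(* Lagrange basis polynomial l_j for nodes tau 0, ..., tau (M-1) (0-based indices) *)
definition lagrange_basis :: "nat \<Rightarrow> (nat \<Rightarrow> real) \<Rightarrow> nat \<Rightarrow> real \<Rightarrow> real" where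
  "lagrange_basis M tau j s = (\<Prod>i\<in>{0..<M}-{j}. (s - tau i) / (tau j - tau i))"

definition right_radau_nodes :: "nat \<Rightarrow> (nat \<Rightarrow> real) \<Rightarrow> bool" where
  "right_radau_nodes M tau \<longleftrightarrow> M \<ge> 1 \<and> 0 < tau 0 \<and> tau (M - 1) = 1 \<and>
     (\<forall>i j. i < j \<and> j < M \<longrightarrow> tau i < tau j) \<and>
     (\<forall>p :: real poly. degree p \<le> 2 * M - 2 \<longrightarrow>
        integral {0..1} (poly p) =
        (\<Sum>j<M. integral {0..1} (lagrange_basis M tau j) * poly p (tau j)))"

definition coll_mat :: "nat \<Rightarrow> (nat \<Rightarrow> real) \<Rightarrow> real mat" where
  "coll_mat M tau = mat M M (\<lambda>(m,j). integral {0..tau m} (lagrange_basis M tau j))"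

definition last_col_ones :: "nat \<Rightarrow> 'a::{zero,one} mat" where
  "last_col_ones M = mat M M (\<lambda>(i,j). if j = M - 1 then 1 else 0)"

definition subdiag_ones :: "nat \<Rightarrow> 'a::{zero,one} mat" where
  "subdiag_ones L = mat L L (\<lambda>(i,j). if i = j + 1 then 1 else 0)"

definition lower_unitri :: "nat \<Rightarrow> 'a::{zero,one} mat \<Rightarrow> bool" where
  "lower_unitri n A \<longleftrightarrow> A \<in> carrier_mat n n \<and> (\<forall>i<n. A $$ (i,i) = 1) \<and>
     (\<forall>i<n. \<forall>j<n. i < j \<longrightarrow> A $$ (i,j) = 0)"

definition upper_tri :: "nat \<Rightarrow> 'a::zero mat \<Rightarrow> bool" where
  "upper_tri n A \<longleftrightarrow> A \<in> carrier_mat n n \<and> (\<forall>i<n. \<forall>j<n. j < i \<longrightarrow> A $$ (i,j) = 0)"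

definition is_vec_norm :: "nat \<Rightarrow> (complex vec \<Rightarrow> real) \<Rightarrow> bool" where
  "is_vec_norm n nv \<longleftrightarrow>
     (\<forall>x\<in>carrier_vec n. nv x \<ge> 0 \<and> (nv x = 0 \<longleftrightarrow> x = 0\<^sub>v n)) \<and>
     (\<forall>x\<in>carrier_vec n. \<forall>a. nv (a \<cdot>\<^sub>v x) = cmod a * nv x) \<and>
     (\<forall>x\<in>carrier_vec n. \<forall>y\<in>carrier_vec n. nv (x + y) \<le> nv x + nv y)"

definition induced_norm :: "nat \<Rightarrow> (complex vec \<Rightarrow> real) \<Rightarrow> complex mat \<Rightarrow> real" where
  "induced_norm n nv B = Sup {nv (B *\<^sub>v x) | x. x \<in> carrier_vec n \<and> nv x = 1}"

definition cmat :: "real mat \<Rightarrow> complex mat" where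
  "cmat B = map_mat complex_of_real B"

end

theory Submission
  imports Defs "Jordan_Normal_Form.Determinant"
begin

text \<open>
  Write \<open>T(\<mu>) = I - P\<^sup>-\<^sup>1 C\<close> for the iteration matrix and \<open>T\<^sub>0 = I \<otimes> (I - Q\<^sub>\<Delta>\<^sup>-\<^sup>1 Q) \<otimes> I\<close>.
  The collocation matrix \<open>Q\<close> is invertible, and so is \<open>Q\<^sub>\<Delta>\<close>, the LU factor \<open>L\<^sub>Q\<close> having
  determinant \<open>1\<close>. Hence \<open>B = I \<otimes> Q\<^sub>\<Delta> \<otimes> A\<close> is invertible and \<open>\<parallel>P\<^sup>-\<^sup>1\<parallel> = O(1/\<mu>)\<close> for
  \<open>P = I - \<mu> B\<close>. Since \<open>Q\<^sub>\<Delta> (I - Q\<^sub>\<Delta>\<^sup>-\<^sup>1 Q) = Q\<^sub>\<Delta> - Q\<close>, the matrices satisfy \<open>B T\<^sub>0 = B - G\<close>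
  for \<open>G = I \<otimes> Q \<otimes> A\<close>; writing \<open>C = I - \<mu> G - F\<close> with \<open>F = E \<otimes> H\<close>, this gives \<open>T(\<mu>) - T\<^sub>0 = P\<^sup>-\<^sup>1 (F - T\<^sub>0)\<close>, which is \<open>O(1/\<mu>)\<close>.
  Therefore \<open>T(\<mu>)\<^sup>k = T\<^sub>0\<^sup>k + O(1/\<mu>)\<close>, and as \<open>\<parallel>C\<parallel> = O(\<mu>)\<close>,
  \<open>\<parallel>C T(\<mu>)\<^sup>k\<parallel> \<le> \<parallel>C\<parallel> (\<parallel>T\<^sub>0\<^sup>k\<parallel> + O(1/\<mu>)) = \<mu> (c \<parallel>T\<^sub>0\<^sup>k\<parallel> + O(1/\<mu>))\<close>.
\<close>

section \<open>Vector norms and induced matrix norms on \<open>\<complex>\<^sup>n\<close>\<close>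

lemma compact_l1_unit_sphere:
  "compact {f::nat \<Rightarrow> complex. (\<forall>i\<ge>n. f i = 0) \<and> (\<Sum>i<n. cmod (f i)) = 1}"
proof -
  define K where "K = (\<lambda>i::nat. if i < n then cball (0::complex) 1 else {0})"
  have "compactin (product_topology (\<lambda>i. euclidean) UNIV) (PiE UNIV K)"
    by (subst compactin_PiE) (auto simp: K_def)
  then have "compact (PiE UNIV K)" by (simp add: euclidean_product_topology)
  moreover have "closed {f::nat \<Rightarrow> complex. (\<Sum>i<n. cmod (f i)) = 1}"
    by (intro closed_Collect_eq continuous_intros continuous_on_norm
        continuous_on_product_coordinates continuous_on_const)
  ultimately have "compact (PiE UNIV K \<inter> {f. (\<Sum>i<n. cmod (f i)) = 1})" by (rule compact_Int_closed)
  moreover have "f \<in> PiE UNIV K \<longleftrightarrow> (\<forall>i\<ge>n. f i = 0)" if "(\<Sum>i<n. cmod (f i)) = 1" for f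
  proof -
    have "cmod (f i) \<le> 1" if "i < n" for i
      using \<open>(\<Sum>i<n. cmod (f i)) = 1\<close> member_le_sum[of i "{..<n}" "\<lambda>i. cmod (f i)"] that by simp
    then show ?thesis by (auto simp: K_def PiE_iff not_less)
  qed
  then have "PiE UNIV K \<inter> {f. (\<Sum>i<n. cmod (f i)) = 1} =
      {f. (\<forall>i\<ge>n. f i = 0) \<and> (\<Sum>i<n. cmod (f i)) = 1}"
    by blast
  ultimately show ?thesis by simp
qed

context
  fixes n :: nat and nv :: "complex vec \<Rightarrow> real"
  assumes nv: "is_vec_norm n nv"
begin

lemma vec_norm_nonneg: "x \<in> carrier_vec n \<Longrightarrow> nv x \<ge> 0"
  using nv unfolding is_vec_norm_def by blast

lemma vec_norm_eq_0_iff: "x \<in> carrier_vec n \<Longrightarrow> nv x = 0 \<longleftrightarrow> x = 0\<^sub>v n"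
  using nv unfolding is_vec_norm_def by blast

lemma vec_norm_smult: "x \<in> carrier_vec n \<Longrightarrow> nv (a \<cdot>\<^sub>v x) = cmod a * nv x"
  using nv unfolding is_vec_norm_def by blast

lemma vec_norm_triangle: "x \<in> carrier_vec n \<Longrightarrow> y \<in> carrier_vec n \<Longrightarrow> nv (x + y) \<le> nv x + nv y"
  using nv unfolding is_vec_norm_def by blast

lemma vec_norm_pos: "x \<in> carrier_vec n \<Longrightarrow> x \<noteq> 0\<^sub>v n \<Longrightarrow> nv x > 0"
  using vec_norm_nonneg vec_norm_eq_0_iff by force

lemma vec_norm_le_diff_add:
  assumes "x \<in> carrier_vec n" "y \<in> carrier_vec n"
  shows "nv x \<le> nv (x - y) + nv y"
proof -
  have "x = (x - y) + y" using assms by (intro eq_vecI) auto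
  then show ?thesis using vec_norm_triangle[of "x - y" y] assms by (metis minus_carrier_vec)
qed

lemma vec_norm_minus_commute:
  assumes "x \<in> carrier_vec n" "y \<in> carrier_vec n"
  shows "nv (x - y) = nv (y - x)"
proof -
  have "x - y = (-1) \<cdot>\<^sub>v (y - x)" using assms by (intro eq_vecI) auto
  then show ?thesis using vec_norm_smult[of "y - x" "-1"] assms by simp
qed

lemma vec_norm_le_sum_unit_vec:
  assumes x: "x \<in> carrier_vec n"
  shows "nv x \<le> (\<Sum>i<n. cmod (x $ i) * nv (unit_vec n i))"
proof -
  have "nv (vec n (\<lambda>j. if j < k then x $ j else 0)) \<le> (\<Sum>i<k. cmod (x $ i) * nv (unit_vec n i))"
    if "k \<le> n" for k
    using that
  proof (induction k)
    case 0
    have "vec n (\<lambda>j. if j < 0 then x $ j else 0) = 0\<^sub>v n" by (intro eq_vecI) auto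
    then show ?case using vec_norm_eq_0_iff[of "0\<^sub>v n"] by simp
  next
    case (Suc k)
    have "vec n (\<lambda>j. if j < Suc k then x $ j else 0) =
        vec n (\<lambda>j. if j < k then x $ j else 0) + (x $ k) \<cdot>\<^sub>v unit_vec n k"
      using Suc.prems by (intro eq_vecI) (auto simp: unit_vec_def less_Suc_eq)
    then have "nv (vec n (\<lambda>j. if j < Suc k then x $ j else 0)) \<le>
        nv (vec n (\<lambda>j. if j < k then x $ j else 0)) + cmod (x $ k) * nv (unit_vec n k)"
      using vec_norm_triangle[of "vec n (\<lambda>j. if j < k then x $ j else 0)" "(x $ k) \<cdot>\<^sub>v unit_vec n k"]
        vec_norm_smult[of "unit_vec n k" "x $ k"] by simp
    then show ?case using Suc by simp
  qed
  moreover have "vec n (\<lambda>j. if j < n then x $ j else 0) = x" using x by (intro eq_vecI) auto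
  ultimately show ?thesis by (metis order_refl)
qed

lemma vec_norm_le_l1_norm:
  assumes "x \<in> carrier_vec n"
  shows "nv x \<le> (\<Sum>i<n. cmod (x $ i)) * (\<Sum>i<n. nv (unit_vec n i))"
proof -
  have "nv x \<le> (\<Sum>i<n. cmod (x $ i) * nv (unit_vec n i))"
    using assms by (rule vec_norm_le_sum_unit_vec)
  also have "\<dots> \<le> (\<Sum>i<n. cmod (x $ i) * (\<Sum>i<n. nv (unit_vec n i)))"
    by (intro sum_mono mult_left_mono member_le_sum) (auto intro: vec_norm_nonneg)
  finally show ?thesis by (simp add: sum_distrib_right)
qed

lemma l1_norm_pos:
  assumes "x \<in> carrier_vec n" "x \<noteq> 0\<^sub>v n"
  shows "(\<Sum>i<n. cmod (x $ i)) > 0"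
proof -
  obtain i where i: "i < n" "x $ i \<noteq> 0"
    using assms by (metis eq_vecI index_zero_vec carrier_vecD dim_vec)
  have "cmod (x $ i) \<le> (\<Sum>i<n. cmod (x $ i))" using i by (intro member_le_sum) auto
  moreover have "cmod (x $ i) > 0" using i by simp
  ultimately show ?thesis by linarith
qed

lemma continuous_on_vec_norm: "continuous_on UNIV (\<lambda>f::nat \<Rightarrow> complex. nv (vec n f))"
proof -
  define cu where "cu = (\<Sum>i<n. nv (unit_vec n i))"
  have "isCont (\<lambda>f::nat \<Rightarrow> complex. nv (vec n f)) f" for f
  proof -
    have coord: "isCont (\<lambda>h::nat \<Rightarrow> complex. h i) f" for i
      by (metis continuous_on_product_coordinates continuous_on_eq_continuous_at open_UNIV UNIV_I)
    have lim: "((\<lambda>h. (\<Sum>i<n. cmod (h i - f i)) * cu) \<longlongrightarrow> (\<Sum>i<n. cmod (f i - f i)) * cu) (at f)"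
      by (intro tendsto_intros isCont_tendsto_compose[OF coord] tendsto_ident_at)
    have "\<bar>nv (vec n h) - nv (vec n f)\<bar> \<le> (\<Sum>i<n. cmod (h i - f i)) * cu" for h
    proof -
      have "nv (vec n h - vec n f) \<le> (\<Sum>i<n. cmod (h i - f i)) * cu"
        using vec_norm_le_l1_norm[of "vec n h - vec n f"] by (simp add: cu_def)
      moreover have "nv (vec n h - vec n f) = nv (vec n f - vec n h)"
        by (intro vec_norm_minus_commute) auto
      moreover have "nv (vec n h) \<le> nv (vec n h - vec n f) + nv (vec n f)"
        "nv (vec n f) \<le> nv (vec n f - vec n h) + nv (vec n h)"
        by (simp_all add: vec_norm_le_diff_add)
      ultimately show ?thesis by linarith
    qed
    then have "((\<lambda>h. nv (vec n h) - nv (vec n f)) \<longlongrightarrow> 0) (at f)"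
      by (intro Lim_null_comparison[OF _ lim[simplified]] always_eventually) auto
    then show ?thesis unfolding isCont_def by (simp add: LIM_zero_iff)
  qed
  then show ?thesis by (simp add: continuous_on_eq_continuous_at)
qed

text \<open>\<open>nv\<close> attains a positive minimum on the compact \<open>\<ell>\<^sub>1\<close>-unit sphere.\<close>

lemma l1_norm_le_vec_norm: "\<exists>c>0. \<forall>x\<in>carrier_vec n. (\<Sum>i<n. cmod (x $ i)) \<le> c * nv x"
proof (cases "n = 0")
  case True
  then show ?thesis by (intro exI[of _ 1]) (auto intro: vec_norm_nonneg)
next
  case False
  define S where "S = {f::nat \<Rightarrow> complex. (\<forall>i\<ge>n. f i = 0) \<and> (\<Sum>i<n. cmod (f i)) = 1}"
  have "(\<Sum>i<n. cmod (if i = 0 then 1 else 0 :: complex)) = (\<Sum>i<n. if i = 0 then 1 else 0)"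
    by (intro sum.cong) auto
  also have "\<dots> = 1" using False by (subst sum.delta) auto
  finally have "(\<lambda>i. if i = 0 then 1 else 0) \<in> S" using False by (simp add: S_def)
  then have "S \<noteq> {}" by blast
  moreover have "compact S" unfolding S_def by (rule compact_l1_unit_sphere)
  ultimately obtain x0 where x0: "x0 \<in> S" and min: "\<And>y. y \<in> S \<Longrightarrow> nv (vec n x0) \<le> nv (vec n y)"
    using continuous_attains_inf[OF \<open>compact S\<close> \<open>S \<noteq> {}\<close> continuous_on_subset[OF continuous_on_vec_norm]]
    by blast
  have "vec n x0 \<noteq> 0\<^sub>v n"
  proof
    assume "vec n x0 = 0\<^sub>v n"
    then have "\<forall>i<n. x0 i = 0" by (metis index_vec index_zero_vec(1))
    then show False using x0 unfolding S_def by simp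
  qed
  then have m0: "nv (vec n x0) > 0" by (intro vec_norm_pos) auto
  have "(\<Sum>i<n. cmod (x $ i)) \<le> 1 / nv (vec n x0) * nv x" if x: "x \<in> carrier_vec n" for x
  proof (cases "x = 0\<^sub>v n")
    case True then show ?thesis using vec_norm_eq_0_iff[of x] x by simp
  next
    case False
    define s where "s = (\<Sum>i<n. cmod (x $ i))"
    have s: "s > 0" unfolding s_def using l1_norm_pos[OF x False] .
    define f where "f = (\<lambda>i. if i < n then x $ i / complex_of_real s else 0)"
    have "(\<Sum>i<n. cmod (f i)) = (\<Sum>i<n. cmod (x $ i) / s)"
      using s by (intro sum.cong) (auto simp: f_def norm_divide)
    then have "f \<in> S" using s by (simp add: S_def f_def s_def sum_divide_distrib[symmetric])
    then have "nv (vec n x0) \<le> nv (vec n f)" by (rule min)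
    also have "vec n f = complex_of_real (1 / s) \<cdot>\<^sub>v x"
      using x by (intro eq_vecI) (auto simp: f_def field_simps)
    also have "nv \<dots> = nv x / s" using vec_norm_smult[OF x] s by (simp add: norm_divide)
    finally show ?thesis using m0 s by (simp add: s_def field_simps)
  qed
  then show ?thesis using m0 by (intro exI[of _ "1 / nv (vec n x0)"]) auto
qed

lemma vec_norm_mult_mat_vec_bounded:
  assumes B: "B \<in> carrier_mat n n"
  shows "\<exists>K\<ge>0. \<forall>x\<in>carrier_vec n. nv (B *\<^sub>v x) \<le> K * nv x"
proof -
  obtain c where c: "c > 0" "\<And>x. x\<in>carrier_vec n \<Longrightarrow> (\<Sum>i<n. cmod (x $ i)) \<le> c * nv x"
    using l1_norm_le_vec_norm by blast
  define cu where "cu = (\<Sum>i<n. nv (unit_vec n i))"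
  define \<beta> where "\<beta> = (\<Sum>i<n. \<Sum>j<n. cmod (B $$ (i,j)))"
  have "cu \<ge> 0" "\<beta> \<ge> 0" unfolding cu_def \<beta>_def by (auto intro!: sum_nonneg vec_norm_nonneg)
  have "nv (B *\<^sub>v x) \<le> \<beta> * cu * c * nv x" if x: "x \<in> carrier_vec n" for x
  proof -
    define S where "S = (\<Sum>l<n. cmod (x $ l))"
    have row: "cmod ((B *\<^sub>v x) $ i) \<le> (\<Sum>j<n. cmod (B $$ (i,j))) * S" if i: "i < n" for i
    proof -
      have "(B *\<^sub>v x) $ i = (\<Sum>j<n. B $$ (i,j) * x $ j)"
        using B x i by (auto simp: scalar_prod_def atLeast0LessThan)
      also have "cmod \<dots> \<le> (\<Sum>j<n. cmod (B $$ (i,j)) * cmod (x $ j))"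
        by (rule order_trans[OF norm_sum]) (simp add: norm_mult)
      also have "\<dots> \<le> (\<Sum>j<n. cmod (B $$ (i,j)) * S)"
        unfolding S_def by (intro sum_mono mult_left_mono member_le_sum) auto
      finally show ?thesis by (simp add: sum_distrib_right)
    qed
    have "nv (B *\<^sub>v x) \<le> (\<Sum>i<n. cmod ((B *\<^sub>v x) $ i)) * cu"
      using B x unfolding cu_def by (intro vec_norm_le_l1_norm) auto
    also have "\<dots> \<le> (\<Sum>i<n. (\<Sum>j<n. cmod (B $$ (i,j))) * S) * cu"
      using \<open>cu \<ge> 0\<close> row by (intro mult_right_mono sum_mono) auto
    also have "\<dots> = \<beta> * cu * S"
      unfolding \<beta>_def by (simp add: sum_distrib_right sum_distrib_left mult_ac)
    also have "\<dots> \<le> \<beta> * cu * (c * nv x)"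
      using c(2)[OF x] \<open>\<beta> \<ge> 0\<close> \<open>cu \<ge> 0\<close> unfolding S_def by (intro mult_left_mono) auto
    finally show ?thesis by simp
  qed
  moreover have "\<beta> * cu * c \<ge> 0" using \<open>cu \<ge> 0\<close> \<open>\<beta> \<ge> 0\<close> c(1) by simp
  ultimately show ?thesis by blast
qed

context
  assumes n: "0 < n"
begin

lemma exists_vec_norm_eq_1: "\<exists>x\<in>carrier_vec n. nv x = 1"
proof -
  define e :: "complex vec" where "e = unit_vec n 0"
  have e: "e \<in> carrier_vec n" unfolding e_def by simp
  have "e $ 0 = 1" using n unfolding e_def by simp
  then have "e \<noteq> 0\<^sub>v n" using n by auto
  with e have epos: "nv e > 0" by (rule vec_norm_pos)
  have "nv (complex_of_real (1 / nv e) \<cdot>\<^sub>v e) = cmod (complex_of_real (1 / nv e)) * nv e"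
    using e by (rule vec_norm_smult)
  also have "\<dots> = 1" using epos by (simp add: norm_divide)
  finally show ?thesis using e by (intro bexI[of _ "complex_of_real (1 / nv e) \<cdot>\<^sub>v e"]) auto
qed

lemma induced_norm_leI:
  assumes "\<And>x. x \<in> carrier_vec n \<Longrightarrow> nv (B *\<^sub>v x) \<le> b * nv x"
  shows "induced_norm n nv B \<le> b"
  unfolding induced_norm_def
proof (rule cSup_least)
  show "{nv (B *\<^sub>v x) |x. x \<in> carrier_vec n \<and> nv x = 1} \<noteq> {}"
    using exists_vec_norm_eq_1 by blast
qed (use assms in fastforce)

lemma mult_mat_vec_le_induced_norm:
  assumes B: "B \<in> carrier_mat n n" and x: "x \<in> carrier_vec n"
  shows "nv (B *\<^sub>v x) \<le> induced_norm n nv B * nv x"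
proof -
  have bdd: "bdd_above {nv (B *\<^sub>v x) | x. x \<in> carrier_vec n \<and> nv x = 1}"
    using vec_norm_mult_mat_vec_bounded[OF B] unfolding bdd_above_def by force
  have unit: "nv (B *\<^sub>v y) \<le> induced_norm n nv B" if "y \<in> carrier_vec n" "nv y = 1" for y
    unfolding induced_norm_def using that by (intro cSup_upper[OF _ bdd]) auto
  show ?thesis
  proof (cases "x = 0\<^sub>v n")
    case True
    then have "B *\<^sub>v x = 0\<^sub>v n" using B by auto
    then show ?thesis using \<open>x = 0\<^sub>v n\<close> vec_norm_eq_0_iff[of "0\<^sub>v n"] by simp
  next
    case False
    with x have xpos: "nv x > 0" by (rule vec_norm_pos)
    define y where "y = complex_of_real (1 / nv x) \<cdot>\<^sub>v x"
    have "y \<in> carrier_vec n" "nv y = 1" using x xpos by (auto simp: y_def vec_norm_smult norm_divide)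
    moreover have "B *\<^sub>v y = complex_of_real (1 / nv x) \<cdot>\<^sub>v (B *\<^sub>v x)"
      unfolding y_def using B x by (rule mult_mat_vec)
    ultimately have "nv (B *\<^sub>v y) = nv (B *\<^sub>v x) / nv x"
      using B x xpos vec_norm_smult[of "B *\<^sub>v x" "complex_of_real (1 / nv x)"] by (simp add: norm_divide)
    then have "nv (B *\<^sub>v x) / nv x \<le> induced_norm n nv B"
      using unit \<open>y \<in> carrier_vec n\<close> \<open>nv y = 1\<close> by metis
    then show ?thesis using xpos by (simp add: field_simps)
  qed
qed

lemma induced_norm_nonneg:
  assumes "B \<in> carrier_mat n n"
  shows "induced_norm n nv B \<ge> 0"
proof -
  obtain x where x: "x \<in> carrier_vec n" "nv x = 1" using exists_vec_norm_eq_1 by blast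
  then show ?thesis
    using mult_mat_vec_le_induced_norm[OF assms x(1)] vec_norm_nonneg[of "B *\<^sub>v x"] assms by simp
qed

lemma induced_norm_mult_le:
  assumes A: "A \<in> carrier_mat n n" and B: "B \<in> carrier_mat n n"
  shows "induced_norm n nv (A * B) \<le> induced_norm n nv A * induced_norm n nv B"
proof (rule induced_norm_leI)
  fix x :: "complex vec" assume x: "x \<in> carrier_vec n"
  have "nv ((A * B) *\<^sub>v x) = nv (A *\<^sub>v (B *\<^sub>v x))" using A B x by (simp add: assoc_mult_mat_vec)
  also have "\<dots> \<le> induced_norm n nv A * nv (B *\<^sub>v x)"
    using A B x by (intro mult_mat_vec_le_induced_norm) auto
  also have "\<dots> \<le> induced_norm n nv A * (induced_norm n nv B * nv x)"
    using A B x by (intro mult_left_mono mult_mat_vec_le_induced_norm induced_norm_nonneg)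
  finally show "nv ((A * B) *\<^sub>v x) \<le> induced_norm n nv A * induced_norm n nv B * nv x"
    by (simp add: mult.assoc)
qed

lemma induced_norm_add_le:
  assumes A: "A \<in> carrier_mat n n" and B: "B \<in> carrier_mat n n"
  shows "induced_norm n nv (A + B) \<le> induced_norm n nv A + induced_norm n nv B"
proof (rule induced_norm_leI)
  fix x :: "complex vec" assume x: "x \<in> carrier_vec n"
  have "nv ((A + B) *\<^sub>v x) \<le> nv (A *\<^sub>v x) + nv (B *\<^sub>v x)"
    using A B x by (simp add: add_mult_distrib_mat_vec vec_norm_triangle)
  also have "\<dots> \<le> induced_norm n nv A * nv x + induced_norm n nv B * nv x"
    using A B x by (intro add_mono mult_mat_vec_le_induced_norm)
  finally show "nv ((A + B) *\<^sub>v x) \<le> (induced_norm n nv A + induced_norm n nv B) * nv x"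
    by (simp add: distrib_right)
qed

lemma induced_norm_smult_le:
  assumes B: "B \<in> carrier_mat n n"
  shows "induced_norm n nv (a \<cdot>\<^sub>m B) \<le> cmod a * induced_norm n nv B"
proof (rule induced_norm_leI)
  fix x :: "complex vec" assume x: "x \<in> carrier_vec n"
  have "(a \<cdot>\<^sub>m B) *\<^sub>v x = a \<cdot>\<^sub>v (B *\<^sub>v x)"
    using B x by (intro eq_vecI) (auto simp: scalar_prod_def sum_distrib_left mult_ac)
  then have "nv ((a \<cdot>\<^sub>m B) *\<^sub>v x) = cmod a * nv (B *\<^sub>v x)" using B x by (simp add: vec_norm_smult)
  also have "\<dots> \<le> cmod a * (induced_norm n nv B * nv x)"
    using B x by (intro mult_left_mono mult_mat_vec_le_induced_norm) auto
  finally show "nv ((a \<cdot>\<^sub>m B) *\<^sub>v x) \<le> cmod a * induced_norm n nv B * nv x" by (simp add: mult.assoc)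
qed

lemma induced_norm_smult:
  assumes B: "B \<in> carrier_mat n n"
  shows "induced_norm n nv (a \<cdot>\<^sub>m B) = cmod a * induced_norm n nv B"
proof (cases "a = 0")
  case True
  have "induced_norm n nv (a \<cdot>\<^sub>m B) \<le> 0" using induced_norm_smult_le[OF B, of a] True by simp
  then show ?thesis using True induced_norm_nonneg[of "a \<cdot>\<^sub>m B"] B by simp
next
  case False
  have "induced_norm n nv B = induced_norm n nv ((1 / a) \<cdot>\<^sub>m (a \<cdot>\<^sub>m B))"
    using False B by (intro arg_cong[where f = "induced_norm n nv"] eq_matI) auto
  also have "\<dots> \<le> cmod (1 / a) * induced_norm n nv (a \<cdot>\<^sub>m B)"
    using B by (intro induced_norm_smult_le) auto
  finally have "cmod a * induced_norm n nv B \<le> induced_norm n nv (a \<cdot>\<^sub>m B)"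
    using False by (simp add: norm_divide field_simps)
  then show ?thesis using induced_norm_smult_le[OF B, of a] by linarith
qed

lemma induced_norm_diff_le:
  assumes A: "A \<in> carrier_mat n n" and B: "B \<in> carrier_mat n n"
  shows "induced_norm n nv (A - B) \<le> induced_norm n nv A + induced_norm n nv B"
proof -
  have "A - B = A + (-1) \<cdot>\<^sub>m B" using A B by (intro eq_matI) auto
  then show ?thesis
    using induced_norm_add_le[OF A, of "(-1) \<cdot>\<^sub>m B"] induced_norm_smult_le[OF B, of "-1"] B by simp
qed

lemma induced_norm_one_le: "induced_norm n nv (1\<^sub>m n) \<le> 1"
  by (rule induced_norm_leI) simp

lemma induced_norm_pow_le:
  assumes A: "A \<in> carrier_mat n n"
  shows "induced_norm n nv (A ^\<^sub>m k) \<le> induced_norm n nv A ^ k"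
proof (induction k)
  case 0
  then show ?case using A induced_norm_one_le by simp
next
  case (Suc k)
  have "induced_norm n nv (A ^\<^sub>m Suc k) \<le> induced_norm n nv (A ^\<^sub>m k) * induced_norm n nv A"
    using A by (simp add: induced_norm_mult_le)
  also have "\<dots> \<le> induced_norm n nv A ^ k * induced_norm n nv A"
    using Suc A by (intro mult_right_mono induced_norm_nonneg)
  finally show ?case by (simp add: mult.commute)
qed

lemma induced_norm_inverse_le:
  assumes B: "B \<in> carrier_mat n n" and Bi: "Bi \<in> carrier_mat n n" and Pinv: "Pinv \<in> carrier_mat n n"
    and BBi: "B * Bi = 1\<^sub>m n" and PinvP: "Pinv * (1\<^sub>m n - complex_of_real \<mu> \<cdot>\<^sub>m B) = 1\<^sub>m n"
    and \<mu>: "\<mu> > 0" "\<mu> \<ge> 2 * induced_norm n nv Bi"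
  shows "induced_norm n nv Pinv \<le> 2 * induced_norm n nv Bi / \<mu>"
proof -
  define p b where "p = induced_norm n nv Pinv" and "b = induced_norm n nv Bi"
  have "Pinv * (1\<^sub>m n - complex_of_real \<mu> \<cdot>\<^sub>m B) = Pinv - complex_of_real \<mu> \<cdot>\<^sub>m (Pinv * B)"
    using Pinv B by (simp add: mult_minus_distrib_mat[OF Pinv one_carrier_mat smult_carrier_mat[OF B]]
        mult_smult_distrib)
  with PinvP have "Pinv - complex_of_real \<mu> \<cdot>\<^sub>m (Pinv * B) = 1\<^sub>m n" by simp
  then have "Pinv - 1\<^sub>m n = Pinv - (Pinv - complex_of_real \<mu> \<cdot>\<^sub>m (Pinv * B))" by simp
  also have "\<dots> = complex_of_real \<mu> \<cdot>\<^sub>m (Pinv * B)"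
    using Pinv B by (intro eq_matI) auto
  finally have "Pinv - 1\<^sub>m n = complex_of_real \<mu> \<cdot>\<^sub>m (Pinv * B)" .
  then have "(Pinv - 1\<^sub>m n) * Bi = complex_of_real \<mu> \<cdot>\<^sub>m Pinv"
    using Pinv B Bi BBi by (simp add: mult_smult_assoc_mat[of _ n n] assoc_mult_mat[OF Pinv B Bi])
  then have "\<mu> * p = induced_norm n nv ((Pinv - 1\<^sub>m n) * Bi)"
    using Pinv \<mu> by (simp add: p_def induced_norm_smult)
  also have "\<dots> \<le> (p + 1) * b"
    using Pinv Bi induced_norm_diff_le[OF Pinv, of "1\<^sub>m n"] induced_norm_one_le
    unfolding p_def b_def
    by (intro order_trans[OF induced_norm_mult_le] mult_right_mono induced_norm_nonneg) auto
  finally have "\<mu> * p \<le> p * b + b" by (simp add: distrib_right)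
  moreover have "p * b \<le> p * (\<mu> / 2)"
    using \<mu> Pinv by (intro mult_left_mono) (auto simp: p_def b_def induced_norm_nonneg)
  ultimately show ?thesis using \<mu> by (simp add: p_def b_def field_simps)
qed

lemma induced_norm_pow_diff_le:
  assumes T: "T \<in> carrier_mat n n" and S: "S \<in> carrier_mat n n"
    and m: "induced_norm n nv T \<le> m" "induced_norm n nv S \<le> m"
  shows "induced_norm n nv (T ^\<^sub>m k - S ^\<^sub>m k) \<le> of_nat k * m ^ (k - 1) * induced_norm n nv (T - S)"
proof (induction k)
  case 0
  have "1\<^sub>m n - 1\<^sub>m n = (0\<^sub>m n n :: complex mat)" by (intro eq_matI) auto
  moreover have "induced_norm n nv (0\<^sub>m n n) \<le> 0"
  proof (rule induced_norm_leI)
    fix x :: "complex vec" assume "x \<in> carrier_vec n"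
    then have "0\<^sub>m n n *\<^sub>v x = 0\<^sub>v n" by (intro eq_vecI) auto
    then show "nv (0\<^sub>m n n *\<^sub>v x) \<le> 0 * nv x" using vec_norm_eq_0_iff[of "0\<^sub>v n"] by simp
  qed
  ultimately have "induced_norm n nv (1\<^sub>m n - 1\<^sub>m n) \<le> 0" by (simp only:)
  then show ?case using T S by simp
next
  case (Suc k)
  define d where "d = induced_norm n nv (T - S)"
  define Tk Sk where "Tk = T ^\<^sub>m k" and "Sk = S ^\<^sub>m k"
  have Tk: "Tk \<in> carrier_mat n n" and Sk: "Sk \<in> carrier_mat n n"
    using T S by (simp_all add: Tk_def Sk_def)
  have m0: "m \<ge> 0" using m(1) induced_norm_nonneg[OF T] by linarith
  have d0: "d \<ge> 0" unfolding d_def using S by (intro induced_norm_nonneg minus_carrier_mat)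
  have "T ^\<^sub>m Suc k - S ^\<^sub>m Suc k = (Tk * T - Sk * T) + (Sk * T - Sk * S)"
    using Tk Sk T S by (intro eq_matI) (auto simp: Tk_def Sk_def)
  also have "\<dots> = (Tk - Sk) * T + Sk * (T - S)"
    using Tk Sk T S by (simp add: minus_mult_distrib_mat[OF Tk Sk T] mult_minus_distrib_mat[OF Sk T S])
  finally have "induced_norm n nv (T ^\<^sub>m Suc k - S ^\<^sub>m Suc k) \<le>
      induced_norm n nv ((Tk - Sk) * T) + induced_norm n nv (Sk * (T - S))"
    using Tk Sk T S by (auto intro!: induced_norm_add_le)
  also have "\<dots> \<le> induced_norm n nv (Tk - Sk) * induced_norm n nv T + induced_norm n nv Sk * d"
    unfolding d_def using Tk Sk T S by (intro add_mono induced_norm_mult_le) auto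
  also have "\<dots> \<le> (of_nat k * m ^ (k - 1) * d) * m + m ^ k * d"
    using Suc T S Sk m m0 d0 induced_norm_pow_le[OF S, of k] power_mono[OF m(2), of k]
    by (intro add_mono mult_mono) (auto simp: d_def Tk_def Sk_def induced_norm_nonneg)
  also have "of_nat k * m ^ (k - 1) * d * m = of_nat k * m ^ k * d"
    by (cases k) (auto simp: mult_ac)
  finally show ?case by (simp add: d_def algebra_simps)
qed

lemma induced_norm_mult_le_perturbed:
  assumes C: "C \<in> carrier_mat n n" and T: "T \<in> carrier_mat n n" and S: "S \<in> carrier_mat n n"
  shows "induced_norm n nv (C * T) \<le> induced_norm n nv C * (induced_norm n nv S + induced_norm n nv (T - S))"
proof -
  have "C * T = C * S + (C * T - C * S)" using C T S by (intro eq_matI) auto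
  also have "C * T - C * S = C * (T - S)" using C T S by (simp add: mult_minus_distrib_mat[OF C T S])
  finally have "induced_norm n nv (C * T) \<le> induced_norm n nv (C * S) + induced_norm n nv (C * (T - S))"
    using C T S by (auto intro!: induced_norm_add_le minus_carrier_mat)
  also have "\<dots> \<le> induced_norm n nv C * induced_norm n nv S + induced_norm n nv C * induced_norm n nv (T - S)"
    using C T S by (intro add_mono induced_norm_mult_le minus_carrier_mat)
  finally show ?thesis by (simp add: distrib_left)
qed

end

end


lemma inv_mat_eqI:
  assumes A: "A \<in> carrier_mat n n" and X: "X \<in> carrier_mat n n"
    and AX: "A * X = 1\<^sub>m n" and XA: "X * A = 1\<^sub>m n"
  shows "inv_mat n A = X"
  unfolding inv_mat_def
proof (rule the_equality)
  show "X \<in> carrier_mat n n \<and> A * X = 1\<^sub>m n \<and> X * A = 1\<^sub>m n" using assms by auto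
  fix Y assume Y: "Y \<in> carrier_mat n n \<and> A * Y = 1\<^sub>m n \<and> Y * A = 1\<^sub>m n"
  then have "Y = Y * (A * X)" using AX by auto
  also have "\<dots> = (Y * A) * X" using assoc_mult_mat[of Y n n A n X n] Y A X by auto
  finally show "Y = X" using Y X by simp
qed

lemma inv_mat:
  assumes "invertible_mat A" "A \<in> carrier_mat n n"
  shows "inv_mat n A \<in> carrier_mat n n" "A * inv_mat n A = 1\<^sub>m n" "inv_mat n A * A = 1\<^sub>m n"
proof -
  obtain X where X: "A * X = 1\<^sub>m (dim_row A)" "X * A = 1\<^sub>m (dim_row X)"
    using assms unfolding invertible_mat_def inverts_mat_def by blast
  have "dim_col X = n" using arg_cong[OF X(1), of dim_col] assms by simp
  moreover have "dim_row X = n" using arg_cong[OF X(2), of dim_col] assms by simp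
  ultimately have "X \<in> carrier_mat n n" "A * X = 1\<^sub>m n" "X * A = 1\<^sub>m n" using X assms by auto
  moreover from this have "inv_mat n A = X" using assms(2) by (intro inv_mat_eqI)
  ultimately show "inv_mat n A \<in> carrier_mat n n" "A * inv_mat n A = 1\<^sub>m n" "inv_mat n A * A = 1\<^sub>m n"
    by simp_all
qed

section \<open>Preconditioned iterations for large \<open>\<mu>\<close>\<close>

lemma preconditioned_iteration_diff:
  fixes B G F T0 Pinv :: "'a::comm_ring_1 mat"
  assumes B: "B \<in> carrier_mat n n" and G: "G \<in> carrier_mat n n" and F: "F \<in> carrier_mat n n"
    and T0: "T0 \<in> carrier_mat n n" and Pinv: "Pinv \<in> carrier_mat n n"
    and PinvP: "Pinv * (1\<^sub>m n - a \<cdot>\<^sub>m B) = 1\<^sub>m n" and BT0: "B * T0 = B - G"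
  shows "1\<^sub>m n - Pinv * (1\<^sub>m n - a \<cdot>\<^sub>m G - F) - T0 = Pinv * (F - T0)"
proof -
  define PB PG PF PT0 where "PB = Pinv * B" and "PG = Pinv * G" and "PF = Pinv * F" and "PT0 = Pinv * T0"
  have carrier: "PB \<in> carrier_mat n n" "PG \<in> carrier_mat n n" "PF \<in> carrier_mat n n" "PT0 \<in> carrier_mat n n"
    using B G F T0 Pinv by (simp_all add: PB_def PG_def PF_def PT0_def)
  have one: "1\<^sub>m n = Pinv - a \<cdot>\<^sub>m PB"
    using PinvP Pinv B by (simp add: PB_def mult_minus_distrib_mat[OF Pinv one_carrier_mat smult_carrier_mat[OF B]]
        mult_smult_distrib)
  have PT0: "(1\<^sub>m n - a \<cdot>\<^sub>m B) * T0 = T0 - a \<cdot>\<^sub>m (B * T0)"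
    using B T0 by (simp add: minus_mult_distrib_mat[OF one_carrier_mat smult_carrier_mat[OF B] T0]
        mult_smult_assoc_mat[OF B T0])
  have "T0 = (Pinv * (1\<^sub>m n - a \<cdot>\<^sub>m B)) * T0" using PinvP T0 by simp
  also have "\<dots> = Pinv * (T0 - a \<cdot>\<^sub>m (B * T0))"
    unfolding PT0[symmetric] using Pinv B T0 by (intro assoc_mult_mat) auto
  also have "\<dots> = PT0 - a \<cdot>\<^sub>m (PB - PG)"
    unfolding BT0 PT0_def PB_def PG_def using Pinv B G T0
    by (simp add: mult_minus_distrib_mat[OF Pinv] mult_smult_distrib[OF Pinv minus_carrier_mat[OF G]]
        mult_minus_distrib_mat[OF Pinv B G] minus_carrier_mat)
  also have "\<dots> = PT0 - a \<cdot>\<^sub>m PB + a \<cdot>\<^sub>m PG"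
    using carrier by (intro eq_matI) (auto simp: algebra_simps)
  finally have T0_eq: "T0 = PT0 - a \<cdot>\<^sub>m PB + a \<cdot>\<^sub>m PG" .
  have "1\<^sub>m n - Pinv * (1\<^sub>m n - a \<cdot>\<^sub>m G - F) - T0 = 1\<^sub>m n - (Pinv - a \<cdot>\<^sub>m PG - PF) - T0"
    using Pinv G F
    by (simp add: PG_def PF_def mult_minus_distrib_mat[OF Pinv minus_carrier_mat[OF smult_carrier_mat[OF G]] F]
        mult_minus_distrib_mat[OF Pinv one_carrier_mat smult_carrier_mat[OF G]] mult_smult_distrib[OF Pinv G])
  also have "\<dots> = (Pinv - a \<cdot>\<^sub>m PB) - (Pinv - a \<cdot>\<^sub>m PG - PF) - (PT0 - a \<cdot>\<^sub>m PB + a \<cdot>\<^sub>m PG)"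
    by (subst (1) one, subst T0_eq) (rule refl)
  also have "\<dots> = PF - PT0" using carrier Pinv by (intro eq_matI) auto
  also have "\<dots> = Pinv * (F - T0)" using Pinv F T0 by (simp add: PF_def PT0_def mult_minus_distrib_mat[OF Pinv])
  finally show ?thesis .
qed

lemma preconditioned_iteration_close:
  fixes G B F T0 Bi Pinv :: "complex mat"
  assumes nv: "is_vec_norm n nv" and n: "0 < n"
    and G: "G \<in> carrier_mat n n" and B: "B \<in> carrier_mat n n" and F: "F \<in> carrier_mat n n"
    and T0: "T0 \<in> carrier_mat n n" and Bi: "Bi \<in> carrier_mat n n" and Pinv: "Pinv \<in> carrier_mat n n"
    and BBi: "B * Bi = 1\<^sub>m n" and BT0: "B * T0 = B - G"
    and PinvP: "Pinv * (1\<^sub>m n - complex_of_real \<mu> \<cdot>\<^sub>m B) = 1\<^sub>m n"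
    and \<mu>: "\<mu> > 0" "\<mu> \<ge> 2 * induced_norm n nv Bi"
  shows "induced_norm n nv (1\<^sub>m n - Pinv * (1\<^sub>m n - complex_of_real \<mu> \<cdot>\<^sub>m G - F) - T0)
    \<le> 2 * induced_norm n nv Bi * induced_norm n nv (F - T0) / \<mu>"
proof -
  have "induced_norm n nv (1\<^sub>m n - Pinv * (1\<^sub>m n - complex_of_real \<mu> \<cdot>\<^sub>m G - F) - T0)
      = induced_norm n nv (Pinv * (F - T0))"
    using B G F T0 Pinv PinvP BT0 by (simp add: preconditioned_iteration_diff)
  also have "\<dots> \<le> induced_norm n nv Pinv * induced_norm n nv (F - T0)"
    using Pinv F T0 by (intro induced_norm_mult_le[OF nv n] minus_carrier_mat)
  also have "\<dots> \<le> 2 * induced_norm n nv Bi / \<mu> * induced_norm n nv (F - T0)"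
    using B Bi Pinv BBi PinvP \<mu> F T0
    by (intro mult_right_mono induced_norm_inverse_le[OF nv n] induced_norm_nonneg[OF nv n] minus_carrier_mat)
  finally show ?thesis by simp
qed

lemma preconditioned_iteration_pow_close:
  fixes G B F T0 Bi :: "complex mat" and \<mu> :: real and n :: nat and nv :: "complex vec \<Rightarrow> real"
  defines "P \<equiv> 1\<^sub>m n - complex_of_real \<mu> \<cdot>\<^sub>m B" and "C \<equiv> 1\<^sub>m n - complex_of_real \<mu> \<cdot>\<^sub>m G - F"
    and "r \<equiv> 2 * induced_norm n nv Bi * induced_norm n nv (F - T0)"
  assumes nv: "is_vec_norm n nv" and n: "0 < n"
    and G: "G \<in> carrier_mat n n" and B: "B \<in> carrier_mat n n" and F: "F \<in> carrier_mat n n"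
    and T0: "T0 \<in> carrier_mat n n" and Bi: "Bi \<in> carrier_mat n n"
    and BBi: "B * Bi = 1\<^sub>m n" and BT0: "B * T0 = B - G"
    and inv: "invertible_mat P" and \<mu>: "\<mu> \<ge> 1" "\<mu> \<ge> 2 * induced_norm n nv Bi"
  shows "induced_norm n nv ((1\<^sub>m n - inv_mat n P * C) ^\<^sub>m k - T0 ^\<^sub>m k)
    \<le> of_nat k * (induced_norm n nv T0 + r) ^ (k - 1) * r / \<mu>"
proof -
  let ?N = "induced_norm n nv"
  define T where "T = 1\<^sub>m n - inv_mat n P * C"
  have "P \<in> carrier_mat n n" unfolding P_def by (intro minus_carrier_mat smult_carrier_mat B)
  note Pinv = inv_mat[OF inv this]
  have C: "C \<in> carrier_mat n n" unfolding C_def using G F by auto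
  have T: "T \<in> carrier_mat n n" unfolding T_def using Pinv(1) C by (intro minus_carrier_mat mult_carrier_mat)
  have r: "r \<ge> 0"
    unfolding r_def using Bi F T0 by (intro mult_nonneg_nonneg induced_norm_nonneg[OF nv n] minus_carrier_mat) auto
  have T_close: "?N (T - T0) \<le> r / \<mu>"
    using preconditioned_iteration_close[OF nv n G B F T0 Bi _ BBi BT0] Pinv \<mu>
    by (simp add: T_def C_def P_def r_def)
  moreover have "r / \<mu> \<le> r" using divide_left_mono[of 1 \<mu> r] \<mu> r by simp
  moreover have "T - T0 + T0 = T" using T T0 by (intro eq_matI) auto
  ultimately have "?N T \<le> ?N T0 + r"
    using induced_norm_add_le[OF nv n minus_carrier_mat[OF T0] T0, of T] by simp
  then have "?N (T ^\<^sub>m k - T0 ^\<^sub>m k) \<le> of_nat k * (?N T0 + r) ^ (k - 1) * ?N (T - T0)"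
    using r induced_norm_nonneg[OF nv n T0] by (intro induced_norm_pow_diff_le[OF nv n T T0]) auto
  also have "\<dots> \<le> of_nat k * (?N T0 + r) ^ (k - 1) * (r / \<mu>)"
    using T_close r induced_norm_nonneg[OF nv n T0] by (intro mult_left_mono) auto
  finally show ?thesis by (simp add: T_def)
qed

text \<open>\<open>T0\<close> is the limit of the iteration matrix \<open>1 - P\<^sup>-\<^sup>1 C\<close> as \<open>\<mu> \<rightarrow> \<infinity>\<close>; the hypothesis
  \<open>B * T0 = B - G\<close> is what identifies it.\<close>

theorem preconditioned_iteration_residual_bound:
  fixes G B F T0 Bi :: "complex mat"
  assumes nv: "is_vec_norm n nv" and n: "0 < n"
    and G: "G \<in> carrier_mat n n" and B: "B \<in> carrier_mat n n" and F: "F \<in> carrier_mat n n"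
    and T0: "T0 \<in> carrier_mat n n" and Bi: "Bi \<in> carrier_mat n n"
    and BBi: "B * Bi = 1\<^sub>m n" and BT0: "B * T0 = B - G"
  shows "\<exists>c>0. \<exists>c'\<ge>0. \<exists>\<mu>s>0. \<forall>\<mu>::real. \<mu> \<ge> \<mu>s \<longrightarrow>
    invertible_mat (1\<^sub>m n - complex_of_real \<mu> \<cdot>\<^sub>m B) \<longrightarrow>
    induced_norm n nv ((1\<^sub>m n - complex_of_real \<mu> \<cdot>\<^sub>m G - F) *
      (1\<^sub>m n - inv_mat n (1\<^sub>m n - complex_of_real \<mu> \<cdot>\<^sub>m B) * (1\<^sub>m n - complex_of_real \<mu> \<cdot>\<^sub>m G - F)) ^\<^sub>m k)
    \<le> \<mu> * (c * induced_norm n nv (T0 ^\<^sub>m k) + c' / \<mu>)"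
proof -
  let ?N = "induced_norm n nv"
  define b \<gamma> f X where "b = ?N Bi" and "\<gamma> = ?N G" and "f = ?N (1\<^sub>m n - F)" and "X = ?N (T0 ^\<^sub>m k)"
  define K where "K = of_nat k * (?N T0 + 2 * b * ?N (F - T0)) ^ (k - 1) * (2 * b * ?N (F - T0))"
  define c' where "c' = f * X + \<gamma> * K + f * K"
  have nonneg: "b \<ge> 0" "\<gamma> \<ge> 0" "f \<ge> 0" "X \<ge> 0" "K \<ge> 0"
    unfolding b_def \<gamma>_def f_def X_def K_def using Bi G F T0
    by (auto intro!: induced_norm_nonneg[OF nv n] minus_carrier_mat mult_nonneg_nonneg add_nonneg_nonneg
        zero_le_power)
  then have "c' \<ge> 0" by (simp add: c'_def)
  have "?N (C * T ^\<^sub>m k) \<le> \<mu> * ((\<gamma> + 1) * X + c' / \<mu>)"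
    if \<mu>: "\<mu> \<ge> max 1 (2 * b)" and inv: "invertible_mat (1\<^sub>m n - complex_of_real \<mu> \<cdot>\<^sub>m B)"
      and C_def: "C = 1\<^sub>m n - complex_of_real \<mu> \<cdot>\<^sub>m G - F"
      and T_def: "T = 1\<^sub>m n - inv_mat n (1\<^sub>m n - complex_of_real \<mu> \<cdot>\<^sub>m B) * C" for \<mu> :: real and C T
  proof -
    have C: "C \<in> carrier_mat n n" unfolding C_def using G F by auto
    have T: "T \<in> carrier_mat n n"
      unfolding T_def using inv_mat(1)[OF inv minus_carrier_mat[OF smult_carrier_mat[OF B]]] C
      by (intro minus_carrier_mat mult_carrier_mat)
    have "C = (1\<^sub>m n - F) - complex_of_real \<mu> \<cdot>\<^sub>m G" unfolding C_def using G F by (intro eq_matI) auto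
    then have C_le: "?N C \<le> \<mu> * \<gamma> + f"
      using induced_norm_diff_le[OF nv n minus_carrier_mat[OF F] smult_carrier_mat[OF G],
          of "1\<^sub>m n" "complex_of_real \<mu>"]
        induced_norm_smult[OF nv n G, of "complex_of_real \<mu>"] \<mu>
      by (simp add: f_def \<gamma>_def)
    have "?N (C * T ^\<^sub>m k) \<le> ?N C * (X + ?N (T ^\<^sub>m k - T0 ^\<^sub>m k))"
      unfolding X_def using C T T0 by (intro induced_norm_mult_le_perturbed[OF nv n]) auto
    also have "\<dots> \<le> (\<mu> * \<gamma> + f) * (X + K / \<mu>)"
      using C_le nonneg C T T0 \<mu>
        preconditioned_iteration_pow_close[OF nv n G B F T0 Bi BBi BT0 inv, of k]
      by (intro mult_mono add_left_mono induced_norm_nonneg[OF nv n] add_nonneg_nonneg minus_carrier_mat)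
         (auto simp: T_def C_def K_def b_def)
    also have "\<dots> = \<mu> * \<gamma> * X + (f * X + \<gamma> * K + f * K / \<mu>)"
      using \<mu> by (simp add: field_simps)
    also have "\<dots> \<le> \<mu> * ((\<gamma> + 1) * X) + c'"
    proof -
      have "f * K / \<mu> \<le> f * K" using divide_left_mono[of 1 \<mu> "f * K"] \<mu> nonneg by simp
      moreover have "0 \<le> \<mu> * X" using \<mu> nonneg by simp
      ultimately show ?thesis by (simp add: c'_def ring_distribs)
    qed
    also have "\<dots> = \<mu> * ((\<gamma> + 1) * X + c' / \<mu>)" using \<mu> by (simp add: field_simps)
    finally show ?thesis .
  qed
  then show ?thesis
    using nonneg \<open>c' \<ge> 0\<close> unfolding X_def
    by (intro exI[of _ "\<gamma> + 1"] exI[of _ c'] exI[of _ "max 1 (2 * b)"] conjI) auto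
qed


section \<open>Kronecker products\<close>

lemma sum_lessThan_mult_div_mod: "(\<Sum>k<a*b. f (k div b) (k mod b)) = (\<Sum>i<a. \<Sum>j<(b::nat). f i j)"
proof -
  have "(\<Sum>i<a. \<Sum>j<b. f i j) = (\<Sum>p\<in>{..<a}\<times>{..<b}. f (fst p) (snd p))"
    by (simp add: sum.cartesian_product case_prod_beta)
  also have "\<dots> = (\<Sum>k<a*b. f (k div b) (k mod b))"
  proof (rule sum.reindex_bij_witness[of _ "\<lambda>k. (k div b, k mod b)" "\<lambda>p. fst p * b + snd p"])
    fix p assume p: "p \<in> {..<a}\<times>{..<b}"
    then obtain i j where ij: "p = (i,j)" "i < a" "j < b" by auto
    have "Suc i * b \<le> a * b" using ij by (intro mult_le_mono1) auto
    then show "fst p * b + snd p \<in> {..<a * b}" using ij by auto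
    have b0: "b \<noteq> 0" using ij by auto
    have "(j + i * b) div b = i" "(j + i * b) mod b = j" using ij b0 by (simp_all add: div_mult_self1)
    then show "((fst p * b + snd p) div b, (fst p * b + snd p) mod b) = p" using ij by (simp add: add.commute)
  next
    fix k assume k: "k \<in> {..<a*b}"
    then have b: "b > 0" by (cases b) auto
    show "fst (k div b, k mod b) * b + snd (k div b, k mod b) = k" by simp
    show "(k div b, k mod b) \<in> {..<a} \<times> {..<b}" using k b
      by (auto simp: less_mult_imp_div_less)
  qed auto
  finally show ?thesis ..
qed

lemma kron_dims [simp]:
  "dim_row (kron A B) = dim_row A * dim_row B" "dim_col (kron A B) = dim_col A * dim_col B"
  unfolding kron_def by auto

lemma kron_carrier [simp]:
  "A \<in> carrier_mat a1 a2 \<Longrightarrow> B \<in> carrier_mat b1 b2 \<Longrightarrow> kron A B \<in> carrier_mat (a1*b1) (a2*b2)"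
  by auto

lemma kron_index: "i < dim_row A * dim_row B \<Longrightarrow> j < dim_col A * dim_col B \<Longrightarrow>
  kron A B $$ (i,j) = A $$ (i div dim_row B, j div dim_col B) * B $$ (i mod dim_row B, j mod dim_col B)"
  unfolding kron_def by auto

lemma kron_mult:
  fixes A B C D :: "'a::comm_semiring_1 mat"
  assumes A: "A \<in> carrier_mat a1 a2" and B: "B \<in> carrier_mat b1 b2"
    and C: "C \<in> carrier_mat a2 a3" and D: "D \<in> carrier_mat b2 b3"
  shows "kron A B * kron C D = kron (A * C) (B * D)"
proof (rule eq_matI)
  show "dim_row (kron A B * kron C D) = dim_row (kron (A * C) (B * D))" using A B C D by simp
  show "dim_col (kron A B * kron C D) = dim_col (kron (A * C) (B * D))" using A B C D by simp
  fix i j assume "i < dim_row (kron (A * C) (B * D))" "j < dim_col (kron (A * C) (B * D))"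
  then have i: "i < a1 * b1" and j: "j < a3 * b3" using A B C D by auto
  have b1: "b1 > 0" using i by (cases b1) auto
  have b3: "b3 > 0" using j by (cases b3) auto
  have "(kron A B * kron C D) $$ (i,j) = (\<Sum>k<a2*b2. kron A B $$ (i,k) * kron C D $$ (k,j))"
    using A B C D i j by (simp add: scalar_prod_def atLeast0LessThan)
  also have "\<dots> = (\<Sum>k<a2*b2. (A $$ (i div b1, k div b2) * C $$ (k div b2, j div b3)) *
       (B $$ (i mod b1, k mod b2) * D $$ (k mod b2, j mod b3)))"
    using A B C D i j by (intro sum.cong refl) (auto simp: kron_index mult_ac)
  also have "\<dots> = (\<Sum>k1<a2. \<Sum>k2<b2. (A $$ (i div b1, k1) * C $$ (k1, j div b3)) *
       (B $$ (i mod b1, k2) * D $$ (k2, j mod b3)))"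
    by (rule sum_lessThan_mult_div_mod[where f = "\<lambda>k1 k2. (A $$ (i div b1, k1) * C $$ (k1, j div b3)) *
       (B $$ (i mod b1, k2) * D $$ (k2, j mod b3))"])
  also have "\<dots> = (\<Sum>k1<a2. A $$ (i div b1, k1) * C $$ (k1, j div b3)) *
       (\<Sum>k2<b2. B $$ (i mod b1, k2) * D $$ (k2, j mod b3))"
    by (simp add: sum_product)
  also have "\<dots> = kron (A * C) (B * D) $$ (i,j)"
    using A B C D i j b1 b3
    by (simp add: kron_index scalar_prod_def atLeast0LessThan less_mult_imp_div_less)
  finally show "(kron A B * kron C D) $$ (i,j) = kron (A * C) (B * D) $$ (i,j)" .
qed

lemma kron_one: "kron (1\<^sub>m a) (1\<^sub>m b) = (1\<^sub>m (a*b) :: 'a::semiring_1 mat)"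
proof (rule eq_matI)
  fix i j assume "i < dim_row (1\<^sub>m (a*b) :: 'a mat)" "j < dim_col (1\<^sub>m (a*b) :: 'a mat)"
  then have i: "i < a*b" and j: "j < a*b" by auto
  then have b: "b > 0" by (cases b) auto
  have "(i div b = j div b \<and> i mod b = j mod b) \<longleftrightarrow> i = j"
    by (metis div_mult_mod_eq)
  then show "kron (1\<^sub>m a) (1\<^sub>m b) $$ (i, j) = (1\<^sub>m (a*b) :: 'a mat) $$ (i, j)"
    using i j b by (auto simp: kron_index less_mult_imp_div_less)
qed auto

lemma kron_minus_left:
  fixes A B C :: "'a::ring mat"
  assumes "A \<in> carrier_mat a1 a2" "B \<in> carrier_mat a1 a2"
  shows "kron (A - B) C = kron A C - kron B C"
proof (rule eq_matI)
  fix i j assume "i < dim_row (kron A C - kron B C)" "j < dim_col (kron A C - kron B C)"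
  then have i: "i < a1 * dim_row C" and j: "j < a2 * dim_col C" using assms by auto
  have "dim_row C > 0" using i by (cases "dim_row C") auto
  moreover have "dim_col C > 0" using j by (cases "dim_col C") auto
  ultimately show "kron (A - B) C $$ (i, j) = (kron A C - kron B C) $$ (i, j)"
    using assms i j by (auto simp: kron_index less_mult_imp_div_less algebra_simps)
qed (use assms in auto)

lemma kron_minus_right:
  fixes A B C :: "'a::ring mat"
  assumes "B \<in> carrier_mat b1 b2" "C \<in> carrier_mat b1 b2"
  shows "kron A (B - C) = kron A B - kron A C"
proof (rule eq_matI)
  fix i j assume "i < dim_row (kron A B - kron A C)" "j < dim_col (kron A B - kron A C)"
  then have i: "i < dim_row A * b1" and j: "j < dim_col A * b2" using assms by auto
  have "b1 > 0" using i by (cases b1) auto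
  moreover have "b2 > 0" using j by (cases b2) auto
  ultimately show "kron A (B - C) $$ (i, j) = (kron A B - kron A C) $$ (i, j)"
    using assms i j by (auto simp: kron_index algebra_simps)
qed (use assms in auto)

lemma one_mat_pow: "(1\<^sub>m n :: 'a::semiring_1 mat) ^\<^sub>m k = 1\<^sub>m n"
  by (induction k) simp_all

lemma kron_pow:
  fixes A B :: "'a::comm_semiring_1 mat"
  assumes A: "A \<in> carrier_mat a a" and B: "B \<in> carrier_mat b b"
  shows "kron A B ^\<^sub>m k = kron (A ^\<^sub>m k) (B ^\<^sub>m k)"
proof (induction k)
  case 0
  then show ?case using A B by (simp add: kron_one)
next
  case (Suc k)
  then have "kron A B ^\<^sub>m Suc k = kron (A ^\<^sub>m k) (B ^\<^sub>m k) * kron A B" by simp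
  also have "\<dots> = kron (A ^\<^sub>m Suc k) (B ^\<^sub>m Suc k)"
    using A B by (simp add: kron_mult[of _ a a _ b b _ a _ b])
  finally show ?case .
qed

lemma kron_one_kron_mult:
  fixes X Y A C :: "'a::comm_semiring_1 mat"
  assumes "X \<in> carrier_mat M M" "Y \<in> carrier_mat M M" "A \<in> carrier_mat N N" "C \<in> carrier_mat N N"
  shows "kron (1\<^sub>m L) (kron X A) * kron (1\<^sub>m L) (kron Y C) = kron (1\<^sub>m L) (kron (X * Y) (A * C))"
  using assms by (simp add: kron_mult[of _ L L _ "M*N" "M*N" _ L _ "M*N"] kron_mult[of _ M M _ N N _ M _ N])

lemma cmat_carrier [simp]: "A \<in> carrier_mat a b \<Longrightarrow> cmat A \<in> carrier_mat a b"
  unfolding cmat_def by auto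

lemma cmat_mult: "A \<in> carrier_mat a b \<Longrightarrow> B \<in> carrier_mat b c \<Longrightarrow> cmat (A * B) = cmat A * cmat B"
  unfolding cmat_def by (rule of_real_hom.mat_hom_mult)

lemma cmat_one: "cmat (1\<^sub>m n) = 1\<^sub>m n"
  unfolding cmat_def by (rule of_real_hom.mat_hom_one)

lemma cmat_minus: "A \<in> carrier_mat a b \<Longrightarrow> B \<in> carrier_mat a b \<Longrightarrow> cmat (A - B) = cmat A - cmat B"
  unfolding cmat_def by (intro eq_matI) auto

lemma cmat_pow: "A \<in> carrier_mat n n \<Longrightarrow> cmat (A ^\<^sub>m k) = cmat A ^\<^sub>m k"
  unfolding cmat_def by (rule of_real_hom.mat_hom_pow)


section \<open>The collocation matrix\<close>

definition lagrange_basis_poly :: "nat \<Rightarrow> (nat \<Rightarrow> real) \<Rightarrow> nat \<Rightarrow> real poly" where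
  "lagrange_basis_poly M tau j = (\<Prod>i\<in>{0..<M}-{j}. Polynomial.smult (1 / (tau j - tau i)) [:- tau i, 1:])"

lemma poly_lagrange_basis_poly: "poly (lagrange_basis_poly M tau j) = lagrange_basis M tau j"
  unfolding lagrange_basis_poly_def lagrange_basis_def by (auto simp: poly_prod fun_eq_iff diff_divide_distrib)

lemma degree_lagrange_basis_poly:
  assumes "j < M"
  shows "degree (lagrange_basis_poly M tau j) < M"
proof -
  have "degree (lagrange_basis_poly M tau j) \<le> (\<Sum>i\<in>{0..<M}-{j}. degree (Polynomial.smult (1 / (tau j - tau i)) [:- tau i, 1:]))"
    unfolding lagrange_basis_poly_def by (rule order_trans[OF degree_prod_sum_le]) (auto simp: o_def)
  also have "\<dots> \<le> (\<Sum>i\<in>{0..<M}-{j}. 1)"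
    by (intro sum_mono order_trans[OF degree_smult_le]) auto
  also have "\<dots> < M" using assms by (simp add: card_Diff_singleton)
  finally show ?thesis .
qed

lemma lagrange_basis_node:
  assumes inj: "inj_on tau {..<M}" and j: "j < M" and m: "m < M"
  shows "lagrange_basis M tau j (tau m) = (if m = j then 1 else 0)"
proof (cases "m = j")
  case True
  have "tau j - tau i \<noteq> 0" if "i \<in> {0..<M}-{j}" for i
    using inj that j by (auto dest: inj_onD)
  then show ?thesis using True unfolding lagrange_basis_def by (auto intro!: prod.neutral)
next
  case False
  then have "m \<in> {0..<M}-{j}" using m by auto
  then have "(\<Prod>i\<in>{0..<M}-{j}. (tau m - tau i) / (tau j - tau i)) = 0"
    by (intro prod_zero) auto
  then show ?thesis using False unfolding lagrange_basis_def by simp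
qed

lemma poly_root_between_equal_integrals:
  fixes p :: "real poly"
  assumes a: "0 \<le> a" "a < b" and eq: "integral {0..a} (poly p) = integral {0..b} (poly p)"
  shows "\<exists>z. a < z \<and> z < b \<and> poly p z = 0"
proof -
  define F where "F = (\<lambda>t. integral {0..t} (poly p))"
  have cont: "continuous_on S (poly p)" for S by (intro continuous_intros)
  have "continuous (at t within {0..b}) F" if "t \<in> {0..b}" for t
    using DERIV_continuous[OF integral_has_real_derivative[OF cont that]] unfolding F_def .
  then have "continuous_on {0..b} F" by (simp add: continuous_on_eq_continuous_within)
  then have contF: "continuous_on {a..b} F" by (rule continuous_on_subset) (use a in auto)
  have derF: "(F has_derivative (*) (poly p x)) (at x)" if "a < x" for x
  proof -
    have "(F has_real_derivative poly p x) (at x within {0..x+1})"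
      unfolding F_def using that a by (intro integral_has_real_derivative cont) auto
    then show ?thesis using that a by (simp add: at_within_Icc_at has_field_derivative_def)
  qed
  have "F a = F b" using eq by (simp add: F_def)
  then have "\<exists>z. a < z \<and> z < b \<and> (*) (poly p z) = (\<lambda>v. 0)"
    using Rolle_deriv[OF a(2) _ contF derF] by blast
  then show ?thesis by (metis mult.right_neutral)
qed

text \<open>An antiderivative vanishing at \<open>0\<close> and at \<open>M\<close> positive nodes has, by Rolle's theorem,
  a derivative with \<open>M\<close> distinct roots.\<close>

lemma poly_eq_0_if_integrals_vanish:
  fixes p :: "real poly"
  assumes t0: "0 < tau 0" and mono: "\<And>i j. i < j \<Longrightarrow> j < M \<Longrightarrow> tau i < tau j"
    and deg: "degree p < M" and int0: "\<And>m. m < M \<Longrightarrow> integral {0..tau m} (poly p) = 0"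
  shows "p = 0"
proof (rule ccontr)
  assume "p \<noteq> 0"
  define a where "a = (\<lambda>i. if i = 0 then 0 else tau (i - 1))"
  have a: "0 \<le> a i \<and> a i < tau i \<and> integral {0..a i} (poly p) = integral {0..tau i} (poly p)"
    if "i < M" for i
  proof (cases i)
    case 0
    then show ?thesis using t0 int0[OF that] by (simp add: a_def)
  next
    case (Suc k)
    then have "0 < tau k" using t0 mono[of 0 k] that by (cases k) auto
    then show ?thesis using Suc mono[of k i] int0[OF that] int0[of k] that by (simp add: a_def)
  qed
  have "\<exists>z. a i < z \<and> z < tau i \<and> poly p z = 0" if "i < M" for i
    using a[OF that] by (intro poly_root_between_equal_integrals) auto
  then obtain z where z: "\<And>i. i < M \<Longrightarrow> a i < z i \<and> z i < tau i \<and> poly p (z i) = 0"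
    by metis
  have z_mono: "z i < z j" if "i < j" "j < M" for i j
  proof -
    have "tau i \<le> tau (j - 1)"
    proof (cases "i < j - 1")
      case True
      then show ?thesis using mono[of i "j - 1"] that by (simp add: less_imp_le)
    next
      case False
      then have "i = j - 1" using that by linarith
      then show ?thesis by simp
    qed
    then show ?thesis using z[of i] z[of j] that by (auto simp: a_def)
  qed
  have "inj_on z {..<M}"
  proof (rule inj_onI)
    fix i j assume "i \<in> {..<M}" "j \<in> {..<M}" "z i = z j"
    then show "i = j" using z_mono[of i j] z_mono[of j i] by (cases i j rule: linorder_cases) auto
  qed
  then have "M = card (z ` {..<M})" by (simp add: card_image)
  also have "\<dots> \<le> card {x. poly p x = 0}"
    using z by (intro card_mono poly_roots_finite \<open>p \<noteq> 0\<close>) auto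
  also have "\<dots> \<le> degree p" by (rule card_poly_roots_bound[OF \<open>p \<noteq> 0\<close>])
  finally show False using deg by simp
qed

lemma coll_mat_carrier [simp]: "coll_mat M tau \<in> carrier_mat M M"
  unfolding coll_mat_def by simp

lemma coll_mat_mult_vec:
  assumes v: "v \<in> carrier_vec M" and m: "m < M"
  shows "(coll_mat M tau *\<^sub>v v) $ m =
    integral {0..tau m} (poly (\<Sum>j<M. Polynomial.smult (v $ j) (lagrange_basis_poly M tau j)))"
proof -
  have "(coll_mat M tau *\<^sub>v v) $ m = (\<Sum>j<M. integral {0..tau m} (\<lambda>s. v $ j * lagrange_basis M tau j s))"
    using v m by (auto simp: coll_mat_def scalar_prod_def atLeast0LessThan mult.commute)
  also have "\<dots> = integral {0..tau m} (\<lambda>s. \<Sum>j<M. v $ j * lagrange_basis M tau j s)"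
    by (rule integral_sum[symmetric])
       (auto intro!: integrable_continuous_interval continuous_intros simp: poly_lagrange_basis_poly[symmetric])
  also have "(\<lambda>s. \<Sum>j<M. v $ j * lagrange_basis M tau j s) =
      poly (\<Sum>j<M. Polynomial.smult (v $ j) (lagrange_basis_poly M tau j))"
    by (simp add: fun_eq_iff poly_sum poly_lagrange_basis_poly)
  finally show ?thesis .
qed

lemma det_coll_mat_nonzero:
  assumes t0: "0 < tau 0" and mono: "\<And>i j. i < j \<Longrightarrow> j < M \<Longrightarrow> tau i < tau j"
  shows "det (coll_mat M tau) \<noteq> 0"
proof
  assume "det (coll_mat M tau) = 0"
  then obtain v where v: "v \<in> carrier_vec M" "v \<noteq> 0\<^sub>v M" and Qv: "coll_mat M tau *\<^sub>v v = 0\<^sub>v M"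
    using det_0_iff_vec_prod_zero[OF coll_mat_carrier] by blast
  define p where "p = (\<Sum>j<M. Polynomial.smult (v $ j) (lagrange_basis_poly M tau j))"
  have "M > 0" using v by (auto intro: eq_vecI)
  then have "degree p < M"
    unfolding p_def by (intro degree_sum_less) (auto intro: le_less_trans[OF degree_smult_le] degree_lagrange_basis_poly)
  moreover have "integral {0..tau m} (poly p) = 0" if "m < M" for m
    using coll_mat_mult_vec[OF v(1) that, of tau] Qv that by (simp add: p_def)
  ultimately have "p = 0" using t0 mono by (intro poly_eq_0_if_integrals_vanish) auto
  have inj: "inj_on tau {..<M}"
  proof (rule inj_onI)
    fix i j assume "i \<in> {..<M}" "j \<in> {..<M}" "tau i = tau j"
    then show "i = j" using mono[of i j] mono[of j i] by (cases i j rule: linorder_cases) auto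
  qed
  have "v $ m = 0" if "m < M" for m
  proof -
    have "v $ m = (\<Sum>j<M. v $ j * lagrange_basis M tau j (tau m))"
      using that by (simp add: lagrange_basis_node[OF inj] if_distrib[of "\<lambda>x. _ * x"] cong: if_cong)
    also have "\<dots> = poly p (tau m)" by (simp add: p_def poly_sum poly_lagrange_basis_poly)
    finally show ?thesis using \<open>p = 0\<close> by simp
  qed
  then show False using v by (auto intro: eq_vecI)
qed

lemma transpose_upper_factor_invertible:
  fixes Q LQ UQ :: "'a::field mat"
  assumes det: "det Q \<noteq> 0" and Q: "Q \<in> carrier_mat M M"
    and LU: "lower_unitri M LQ" "upper_tri M UQ" "transpose_mat Q = LQ * UQ"
  shows "\<exists>Qi \<in> carrier_mat M M. transpose_mat UQ * Qi = 1\<^sub>m M \<and> Qi * transpose_mat UQ = 1\<^sub>m M"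
proof -
  have LQ: "LQ \<in> carrier_mat M M" and UQ: "UQ \<in> carrier_mat M M"
    using LU unfolding lower_unitri_def upper_tri_def by auto
  have "det LQ = prod_list (diag_mat LQ)"
    using LU(1) LQ unfolding lower_unitri_def by (intro det_lower_triangular) auto
  also have "\<dots> = 1" using LU(1) LQ unfolding lower_unitri_def prod_list_diag_prod by auto
  finally have "det LQ = 1" .
  then have "det UQ = det Q"
    using LU(3) LQ UQ Q by (metis det_mult det_transpose mult_1)
  then have "transpose_mat UQ \<in> Units (ring_mat TYPE('a) M ())"
    using UQ det by (intro det_non_zero_imp_unit) (auto simp: det_transpose)
  then show ?thesis unfolding Units_def by (auto simp: ring_mat_simps)
qed

lemma coll_mat_upper_factor_inverse:
  assumes t0: "0 < tau 0" and mono: "\<And>i j. i < j \<Longrightarrow> j < M \<Longrightarrow> tau i < tau j"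
    and LU: "lower_unitri M LQ" "upper_tri M UQ" "transpose_mat (coll_mat M tau) = LQ * UQ"
  shows "inv_mat M (transpose_mat UQ) \<in> carrier_mat M M"
    and "transpose_mat UQ * inv_mat M (transpose_mat UQ) = 1\<^sub>m M"
proof -
  obtain Qi where "Qi \<in> carrier_mat M M" "transpose_mat UQ * Qi = 1\<^sub>m M" "Qi * transpose_mat UQ = 1\<^sub>m M"
    using transpose_upper_factor_invertible[OF det_coll_mat_nonzero[of tau M, OF t0 mono] coll_mat_carrier LU] by blast
  moreover have "transpose_mat UQ \<in> carrier_mat M M" using LU(2) by (auto simp: upper_tri_def)
  ultimately show "inv_mat M (transpose_mat UQ) \<in> carrier_mat M M"
    and "transpose_mat UQ * inv_mat M (transpose_mat UQ) = 1\<^sub>m M"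
    by (simp_all add: inv_mat_eqI)
qed

section \<open>Collocation problems with the LU preconditioner\<close>

lemma kron_collocation_right_inverse:
  fixes Q\<Delta> Q\<Delta>i :: "real mat" and A Ai :: "complex mat"
  assumes "Q\<Delta> \<in> carrier_mat M M" "Q\<Delta>i \<in> carrier_mat M M" "Q\<Delta> * Q\<Delta>i = 1\<^sub>m M"
    and "A \<in> carrier_mat N N" "Ai \<in> carrier_mat N N" "A * Ai = 1\<^sub>m N"
  shows "kron (1\<^sub>m L) (kron (cmat Q\<Delta>) A) * kron (1\<^sub>m L) (kron (cmat Q\<Delta>i) Ai) = 1\<^sub>m (L * M * N)"
proof -
  have "cmat Q\<Delta> * cmat Q\<Delta>i = 1\<^sub>m M" using assms by (simp add: cmat_mult[symmetric] cmat_one)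
  then show ?thesis using assms by (simp add: kron_one_kron_mult[where M = M and N = N] kron_one mult.assoc)
qed

lemma kron_collocation_limit_iteration:
  fixes Q Q\<Delta> Q\<Delta>i :: "real mat" and A :: "complex mat"
  assumes Q: "Q \<in> carrier_mat M M" and Q\<Delta>: "Q\<Delta> \<in> carrier_mat M M" and Q\<Delta>i: "Q\<Delta>i \<in> carrier_mat M M"
    and inv: "Q\<Delta> * Q\<Delta>i = 1\<^sub>m M" and A: "A \<in> carrier_mat N N"
  shows "kron (1\<^sub>m L) (kron (cmat Q\<Delta>) A) * kron (1\<^sub>m L) (kron (cmat (1\<^sub>m M - Q\<Delta>i * Q)) (1\<^sub>m N)) =
    kron (1\<^sub>m L) (kron (cmat Q\<Delta>) A) - kron (1\<^sub>m L) (kron (cmat Q) A)"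
proof -
  have "Q\<Delta> * (1\<^sub>m M - Q\<Delta>i * Q) = Q\<Delta> - Q\<Delta> * (Q\<Delta>i * Q)"
    using Q Q\<Delta> Q\<Delta>i by (simp add: mult_minus_distrib_mat[OF Q\<Delta> one_carrier_mat mult_carrier_mat[OF Q\<Delta>i Q]])
  also have "Q\<Delta> * (Q\<Delta>i * Q) = Q"
    using Q Q\<Delta> Q\<Delta>i inv by (simp add: assoc_mult_mat[OF Q\<Delta> Q\<Delta>i Q, symmetric])
  moreover have "1\<^sub>m M - Q\<Delta>i * Q \<in> carrier_mat M M" using Q Q\<Delta>i by (intro minus_carrier_mat mult_carrier_mat)
  ultimately have "cmat Q\<Delta> * cmat (1\<^sub>m M - Q\<Delta>i * Q) = cmat Q\<Delta> - cmat Q"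
    using Q Q\<Delta> by (simp add: cmat_mult[symmetric, of _ M M] cmat_minus[OF Q\<Delta> Q])
  then show ?thesis
    using Q Q\<Delta> Q\<Delta>i A by (simp add: kron_one_kron_mult[where M = M and N = N] minus_carrier_mat
        kron_minus_left[of _ M M] kron_minus_right[of _ "M * N" "M * N"])
qed

lemma kron_one_kron_cmat_pow:
  assumes "R \<in> carrier_mat M M"
  shows "kron (1\<^sub>m L) (kron (cmat R) (1\<^sub>m N)) ^\<^sub>m k =
    (kron (1\<^sub>m L) (kron (cmat (R ^\<^sub>m k)) (1\<^sub>m N)) :: complex mat)"
  using assms by (simp add: kron_pow[of _ L _ "M*N"] kron_pow[of _ M _ N] cmat_pow one_mat_pow)

theorem lemma4:
  fixes L M N :: nat and tau :: "nat \<Rightarrow> real" and A :: "complex mat"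
    and LQ UQ :: "real mat" and nv :: "complex vec \<Rightarrow> real"
  assumes "L > 0" "M > 0" "N > 0"
    and radau: "right_radau_nodes M tau"
    and A: "A \<in> carrier_mat N N" "invertible_mat A"
    and LU: "lower_unitri M LQ" "upper_tri M UQ" "transpose_mat (coll_mat M tau) = LQ * UQ"
    and nv: "is_vec_norm (L*M*N) nv"
  shows "\<forall>k::nat. \<exists>c>0. \<exists>c'\<ge>0. \<exists>\<mu>s>0. \<forall>\<mu>::real. \<mu> \<ge> \<mu>s \<longrightarrow>
    (let Q = coll_mat M tau; Q\<Delta> = transpose_mat UQ;
         C = 1\<^sub>m (L*M*N) - complex_of_real \<mu> \<cdot>\<^sub>m kron (1\<^sub>m L) (kron (cmat Q) A)
             - kron (subdiag_ones L) (kron (last_col_ones M) (1\<^sub>m N));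
         P = 1\<^sub>m (L*M*N) - complex_of_real \<mu> \<cdot>\<^sub>m kron (1\<^sub>m L) (kron (cmat Q\<Delta>) A)
     in invertible_mat P \<longrightarrow>
        induced_norm (L*M*N) nv (C * (1\<^sub>m (L*M*N) - inv_mat (L*M*N) P * C) ^\<^sub>m k)
        \<le> \<mu> * (c * induced_norm (L*M*N) nv
                 (kron (1\<^sub>m L) (kron (cmat ((1\<^sub>m M - inv_mat M Q\<Delta> * Q) ^\<^sub>m k)) (1\<^sub>m N)))
               + c' / \<mu>))"
proof -
  define Q Q\<Delta> where "Q = coll_mat M tau" and "Q\<Delta> = transpose_mat UQ"
  define R where "R = 1\<^sub>m M - inv_mat M Q\<Delta> * Q"
  have n: "L * (M * N) = L * M * N" "0 < L * M * N" using assms(1-3) by simp_all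
  have Q: "Q \<in> carrier_mat M M" by (simp add: Q_def)
  have Q\<Delta>: "Q\<Delta> \<in> carrier_mat M M" using LU(2) by (auto simp: Q\<Delta>_def upper_tri_def)
  have Q\<Delta>i: "inv_mat M Q\<Delta> \<in> carrier_mat M M" "Q\<Delta> * inv_mat M Q\<Delta> = 1\<^sub>m M"
    using radau coll_mat_upper_factor_inverse[OF _ _ LU] unfolding Q\<Delta>_def right_radau_nodes_def by blast+
  have R: "R \<in> carrier_mat M M" using Q Q\<Delta>i by (simp add: R_def minus_carrier_mat)
  have Ai: "inv_mat N A \<in> carrier_mat N N" "A * inv_mat N A = 1\<^sub>m N" using inv_mat[OF A(2,1)] by auto
  have carrier: "kron (1\<^sub>m L) (kron (cmat Q) A) \<in> carrier_mat (L*M*N) (L*M*N)"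
    "kron (1\<^sub>m L) (kron (cmat Q\<Delta>) A) \<in> carrier_mat (L*M*N) (L*M*N)"
    "kron (subdiag_ones L) (kron (last_col_ones M) (1\<^sub>m N)) \<in> carrier_mat (L*M*N) (L*M*N)"
    "kron (1\<^sub>m L) (kron (cmat R) (1\<^sub>m N)) \<in> carrier_mat (L*M*N) (L*M*N)"
    "kron (1\<^sub>m L) (kron (cmat (inv_mat M Q\<Delta>)) (inv_mat N A)) \<in> carrier_mat (L*M*N) (L*M*N)"
    using Q Q\<Delta> Q\<Delta>i R A Ai unfolding n(1)[symmetric]
    by (auto simp: subdiag_ones_def last_col_ones_def)
  show ?thesis
    using preconditioned_iteration_residual_bound[OF nv n(2) carrier
        kron_collocation_right_inverse[where L = L, OF Q\<Delta> Q\<Delta>i A(1) Ai]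
        kron_collocation_limit_iteration[where L = L, OF Q Q\<Delta> Q\<Delta>i(1,2) A(1), folded R_def]]
    unfolding Let_def Q_def[symmetric] Q\<Delta>_def[symmetric] R_def[symmetric]
      kron_one_kron_cmat_pow[OF R, symmetric]
    by blast
qed

end
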